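(* Consider the system \[ \begin{aligned} \dot S_h(t)&=\beta_h-C_{vh}\frac{I_v(t)}{N_v(t)}S_h(t)-\mu_hS_h(t),\\ \dot I_h(t)&=C_{vh}\frac{I_v(t-\tau)}{N_v(t-\tau)}S_h(t-\tau)-\mu_hI_h(t),\\ \dot S_v(t)&=\beta_v-C_{hv}I_h(t)S_v(t)-\mu_vS_v(t),\\ \dot I_v(t)&=C_{hv}I_h(t)S_v(t)-\mu_vI_v(t), \end{aligned} \] with $N_v=S_v+I_v$ and positive parameters $\beta_h,\beta_v,\mu_h,\mu_v,C_{vh},C_{hv}$. Let $R_0=\sqrt{C_{vh}C_{hv}\beta_h/(\mu_h^2\mu_v)}$. If $R_0>1$, then for every $\tau\ge0$ the system is weakly persistent in $D$.
   Context: $C_+=\{\varphi\in C([-\tau,0],\mathbb{R}_+^4):\varphi_3(\theta)+\varphi_4(\theta)>0\ \forall\theta\in[-\tau,0]\}$ with the sup-norm, and $D=\{\varphi\in C_+:\varphi_2(0)>0\}$. The system is called weakly persistent (in $D$) if for the solution through any $\varphi\in D$, $\limsup_{t\to\infty}u(t)>0$ for each $u\in\{S_h,I_h,S_v,I_v\}$. *)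

theory Defs
  imports "HOL-Analysis.Analysis" "HOL-Library.Liminf_Limsup"
begin

text \<open>Initial data: four real functions on [-tau,0] (components S_h, I_h, S_v, I_v).
  Phase space C_+: continuous, nonnegative, with phi3 + phi4 > 0 on [-tau,0].\<close>

definition C_plus :: "real \<Rightarrow> (real \<Rightarrow> real) \<Rightarrow> (real \<Rightarrow> real) \<Rightarrow> (real \<Rightarrow> real) \<Rightarrow> (real \<Rightarrow> real) \<Rightarrow> bool" where
  "C_plus tau p1 p2 p3 p4 \<longleftrightarrow>
     continuous_on {-tau..0} p1 \<and> continuous_on {-tau..0} p2 \<and>
     continuous_on {-tau..0} p3 \<and> continuous_on {-tau..0} p4 \<and>
     (\<forall>\<theta>\<in>{-tau..0}. p1 \<theta> \<ge> 0 \<and> p2 \<theta> \<ge> 0 \<and> p3 \<theta> \<ge> 0 \<and> p4 \<theta> \<ge> 0 \<and> p3 \<theta> + p4 \<theta> > 0)"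

definition D_set :: "real \<Rightarrow> (real \<Rightarrow> real) \<Rightarrow> (real \<Rightarrow> real) \<Rightarrow> (real \<Rightarrow> real) \<Rightarrow> (real \<Rightarrow> real) \<Rightarrow> bool" where
  "D_set tau p1 p2 p3 p4 \<longleftrightarrow> C_plus tau p1 p2 p3 p4 \<and> p2 0 > 0"

definition is_solution ::
  "real \<Rightarrow> real \<Rightarrow> real \<Rightarrow> real \<Rightarrow> real \<Rightarrow> real \<Rightarrow> real \<Rightarrow>
   (real \<Rightarrow> real) \<Rightarrow> (real \<Rightarrow> real) \<Rightarrow> (real \<Rightarrow> real) \<Rightarrow> (real \<Rightarrow> real) \<Rightarrow>
   (real \<Rightarrow> real) \<Rightarrow> (real \<Rightarrow> real) \<Rightarrow> (real \<Rightarrow> real) \<Rightarrow> (real \<Rightarrow> real) \<Rightarrow> bool" where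
  "is_solution \<beta>h \<beta>v \<mu>h \<mu>v Cvh Chv tau p1 p2 p3 p4 Sh Ih Sv Iv \<longleftrightarrow>
     (\<forall>\<theta>\<in>{-tau..0}. Sh \<theta> = p1 \<theta> \<and> Ih \<theta> = p2 \<theta> \<and> Sv \<theta> = p3 \<theta> \<and> Iv \<theta> = p4 \<theta>) \<and>
     continuous_on {-tau..} Sh \<and> continuous_on {-tau..} Ih \<and>
     continuous_on {-tau..} Sv \<and> continuous_on {-tau..} Iv \<and>
     (\<forall>t\<ge>0.
        (Sh has_real_derivative
           (\<beta>h - Cvh * Iv t / (Sv t + Iv t) * Sh t - \<mu>h * Sh t)) (at t within {0..}) \<and>
        (Ih has_real_derivative
           (Cvh * Iv (t - tau) / (Sv (t - tau) + Iv (t - tau)) * Sh (t - tau) - \<mu>h * Ih t))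
           (at t within {0..}) \<and>
        (Sv has_real_derivative
           (\<beta>v - Chv * Ih t * Sv t - \<mu>v * Sv t)) (at t within {0..}) \<and>
        (Iv has_real_derivative
           (Chv * Ih t * Sv t - \<mu>v * Iv t)) (at t within {0..}))"

definition weakly_persistent ::
  "real \<Rightarrow> real \<Rightarrow> real \<Rightarrow> real \<Rightarrow> real \<Rightarrow> real \<Rightarrow> real \<Rightarrow> bool" where
  "weakly_persistent \<beta>h \<beta>v \<mu>h \<mu>v Cvh Chv tau \<longleftrightarrow>
     (\<forall>p1 p2 p3 p4 Sh Ih Sv Iv.
        D_set tau p1 p2 p3 p4 \<longrightarrow>
        is_solution \<beta>h \<beta>v \<mu>h \<mu>v Cvh Chv tau p1 p2 p3 p4 Sh Ih Sv Iv \<longrightarrow>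
        Limsup at_top (\<lambda>t. ereal (Sh t)) > 0 \<and> Limsup at_top (\<lambda>t. ereal (Ih t)) > 0 \<and>
        Limsup at_top (\<lambda>t. ereal (Sv t)) > 0 \<and> Limsup at_top (\<lambda>t. ereal (Iv t)) > 0)"

end

(* If the infected hosts or the infected vectors had limsup 0, then both would tend to 0,
   since each is driven linearly by the other. The susceptibles and the vector population
   would then approach the disease-free values, and near them the infected compartments satisfy
   I_h' >= a I_v(t - tau) - mu_h I_h and I_v' >= b I_h - mu_v I_v with a b > mu_h mu_v, because
   a b tends to C_vh C_hv beta_h / mu_h = R_0^2 mu_h mu_v. For such a pair the functional
   I_h + (mu_h / b) I_v + a * (integral of I_v over [t - tau, t]) is nondecreasing and positive,
   contradicting the decay. The susceptibles persist because their inflow is bounded away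
   from zero. *)
theory Submission
  imports Defs "HOL-Real_Asymp.Real_Asymp"
begin

section \<open>Linear differential inequalities\<close>

lemma exp_weighted_increasing:
  fixes x x' :: "real \<Rightarrow> real"
  assumes "T \<le> u" "continuous_on {T..u} x"
    and "\<And>t. T < t \<Longrightarrow> t < u \<Longrightarrow> (x has_real_derivative x' t) (at t)"
    and "\<And>t. T < t \<Longrightarrow> t < u \<Longrightarrow> x' t + a * x t \<ge> 0"
  shows "x T * exp (a * T) \<le> x u * exp (a * u)"
proof (rule DERIV_nonneg_imp_increasing_open[OF assms(1)])
  fix t assume t: "T < t" "t < u"
  have "((\<lambda>t. x t * exp (a * t)) has_real_derivative exp (a * t) * (x' t + a * x t)) (at t)"
    by (auto intro!: derivative_eq_intros assms(3)[OF t] simp: algebra_simps)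
  then show "\<exists>y. ((\<lambda>t. x t * exp (a * t)) has_real_derivative y) (at t) \<and> 0 \<le> y"
    using assms(4)[OF t] by force
qed (intro continuous_intros assms(2))

lemma linear_diff_ineq_le:
  fixes f f' :: "real \<Rightarrow> real"
  assumes "\<mu> > 0" "continuous_on {T..} f"
    and "\<And>t. T < t \<Longrightarrow> (f has_real_derivative f' t) (at t)"
    and "\<And>t. T < t \<Longrightarrow> f' t \<le> A - \<mu> * f t"
    and "T \<le> t"
  shows "f t \<le> A/\<mu> + (f T - A/\<mu>) * exp (-\<mu>*(t-T))"
proof -
  have "(A/\<mu> - f T) * exp (\<mu> * T) \<le> (A/\<mu> - f t) * exp (\<mu> * t)"
  proof (rule exp_weighted_increasing[where x'="\<lambda>t. - f' t"])
    show "continuous_on {T..t} (\<lambda>t. A/\<mu> - f t)"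
      by (intro continuous_intros continuous_on_subset[OF assms(2)]) auto
  qed (use assms in \<open>auto intro!: derivative_eq_intros simp: algebra_simps\<close>)
  then have "(A/\<mu> - f T) * (exp (\<mu> * T) / exp (\<mu> * t)) \<le> A/\<mu> - f t"
    by (simp add: divide_le_eq)
  moreover have "exp (\<mu> * T) / exp (\<mu> * t) = exp (-\<mu>*(t-T))"
    by (simp add: exp_diff [symmetric] algebra_simps)
  ultimately have "(A/\<mu> - f T) * exp (-\<mu>*(t-T)) \<le> A/\<mu> - f t"
    by simp
  then show ?thesis by (simp add: algebra_simps)
qed

lemma linear_diff_ineq_eventually_le:
  fixes f f' :: "real \<Rightarrow> real"
  assumes "\<mu> > 0" "continuous_on {T..} f"
    and "\<And>t. T < t \<Longrightarrow> (f has_real_derivative f' t) (at t)"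
    and "\<And>t. T < t \<Longrightarrow> f' t \<le> A - \<mu> * f t"
    and "\<epsilon> > 0"
  shows "eventually (\<lambda>t. f t \<le> A/\<mu> + \<epsilon>) at_top"
proof -
  have "((\<lambda>t. (f T - A/\<mu>) * exp (-\<mu>*(t-T))) \<longlongrightarrow> 0) at_top"
    using \<open>\<mu> > 0\<close> by real_asymp
  then have "eventually (\<lambda>t. (f T - A/\<mu>) * exp (-\<mu>*(t-T)) < \<epsilon>) at_top"
    using \<open>\<epsilon> > 0\<close> by (rule order_tendstoD)
  with eventually_ge_at_top[of T] show ?thesis
    by eventually_elim (use linear_diff_ineq_le[OF assms(1-4)] in force)
qed

lemma linear_diff_ineq_eventually_ge:
  fixes f f' :: "real \<Rightarrow> real"
  assumes "\<mu> > 0" "continuous_on {T..} f"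
    and "\<And>t. T < t \<Longrightarrow> (f has_real_derivative f' t) (at t)"
    and "\<And>t. T < t \<Longrightarrow> f' t \<ge> A - \<mu> * f t"
    and "\<epsilon> > 0"
  shows "eventually (\<lambda>t. f t \<ge> A/\<mu> - \<epsilon>) at_top"
  using linear_diff_ineq_eventually_le[of \<mu> T "\<lambda>t. - f t" "\<lambda>t. - f' t" "-A" \<epsilon>] assms
  by (force intro!: derivative_eq_intros intro: continuous_intros simp: algebra_simps)

lemma linear_diff_ineq_le_max:
  fixes f f' :: "real \<Rightarrow> real"
  assumes "\<mu> > 0" "continuous_on {T..} f"
    and "\<And>t. T < t \<Longrightarrow> (f has_real_derivative f' t) (at t)"
    and "\<And>t. T < t \<Longrightarrow> f' t \<le> A - \<mu> * f t"
    and "T \<le> t"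
  shows "f t \<le> max (f T) (A/\<mu>)"
proof -
  have "exp (-\<mu>*(t-T)) \<le> 1" using assms(1,5) by simp
  then have "(f T - A/\<mu>) * exp (-\<mu>*(t-T)) \<le> max 0 (f T - A/\<mu>)"
    by (cases "f T \<le> A/\<mu>") (auto simp: mult_nonpos_nonneg mult_left_le)
  then show ?thesis using linear_diff_ineq_le[OF assms] by linarith
qed

lemma linear_diff_ineq_ge_min:
  fixes f f' :: "real \<Rightarrow> real"
  assumes "\<mu> > 0" "continuous_on {T..} f"
    and "\<And>t. T < t \<Longrightarrow> (f has_real_derivative f' t) (at t)"
    and "\<And>t. T < t \<Longrightarrow> f' t \<ge> A - \<mu> * f t"
    and "T \<le> t"
  shows "f t \<ge> min (f T) (A/\<mu>)"
  using linear_diff_ineq_le_max[of \<mu> T "\<lambda>t. - f t" "\<lambda>t. - f' t" "-A" t] assms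
  by (force intro!: derivative_eq_intros intro: continuous_intros simp: algebra_simps)

section \<open>Invariance of nonnegativity\<close>

lemma continuous_on_pos_neighbourhood:
  fixes f :: "real \<Rightarrow> real"
  assumes "continuous_on S f" "s \<in> S" "f s > 0"
  obtains d where "d > 0" "\<And>u. u \<in> S \<Longrightarrow> \<bar>u - s\<bar> < d \<Longrightarrow> f u > 0"
proof -
  obtain d where "d > 0" and d: "\<forall>u\<in>S. dist u s < d \<longrightarrow> dist (f u) (f s) < f s"
    using assms unfolding continuous_on_iff by blast
  show thesis
  proof (rule that[OF \<open>d > 0\<close>])
    fix u assume "u \<in> S" "\<bar>u - s\<bar> < d"
    then show "f u > 0" using d by (force simp: dist_real_def)
  qed
qed

lemma nonneg_real_induct [consumes 1, case_names step]:
  fixes P :: "real \<Rightarrow> bool"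
  assumes "0 \<le> t"
    and step: "\<And>s. 0 \<le> s \<Longrightarrow> (\<And>t. 0 \<le> t \<Longrightarrow> t < s \<Longrightarrow> P t) \<Longrightarrow>
      \<exists>\<delta>>0. \<forall>t. s \<le> t \<longrightarrow> t < s + \<delta> \<longrightarrow> P t"
  shows "P t"
proof (rule ccontr)
  define F where "F = {t. 0 \<le> t \<and> \<not> P t}"
  assume "\<not> P t"
  then have "t \<in> F" using \<open>0 \<le> t\<close> by (simp add: F_def)
  have bdd: "bdd_below F" by (rule bdd_belowI[of _ 0]) (simp add: F_def)
  define s where "s = Inf F"
  have "0 \<le> s" unfolding s_def using \<open>t \<in> F\<close> by (intro cInf_greatest) (auto simp: F_def)
  moreover have "P u" if "0 \<le> u" "u < s" for u
    using cInf_lower[OF _ bdd, of u] that by (force simp: F_def s_def)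
  ultimately obtain \<delta> where "\<delta> > 0" and P_after: "\<And>u. s \<le> u \<Longrightarrow> u < s + \<delta> \<Longrightarrow> P u"
    using step by blast
  then obtain u where "u \<in> F" "u < s + \<delta>"
    using cInf_less_iff[OF _ bdd, of "s + \<delta>"] \<open>t \<in> F\<close> by (auto simp: s_def)
  moreover have "s \<le> u" unfolding s_def by (rule cInf_lower[OF \<open>u \<in> F\<close> bdd])
  ultimately show False using P_after by (simp add: F_def)
qed

lemma nonneg_if_deriv_pos_at_zeros:
  fixes f :: "real \<Rightarrow> real"
  assumes cont: "continuous_on {0..} f" and "f 0 \<ge> 0"
    and deriv: "\<And>t. t \<ge> 0 \<Longrightarrow> f t = 0 \<Longrightarrow> \<exists>D>0. (f has_real_derivative D) (at t within {0..})"
    and "t \<ge> 0"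
  shows "f t \<ge> 0"
  using \<open>t \<ge> 0\<close>
proof (induction rule: nonneg_real_induct)
  case (step s)
  have "f s \<ge> 0"
  proof (cases "s = 0")
    case False
    then have "closure {0..<s} = {0..s}" using step.hyps by simp
    moreover have "continuous_on {0..s} f" by (rule continuous_on_subset[OF cont]) auto
    ultimately show ?thesis
      using continuous_ge_on_closure[of "{0..<s}" f s 0] step by auto
  qed (use \<open>f 0 \<ge> 0\<close> in simp)
  then consider "f s > 0" | "f s = 0" by linarith
  then show ?case
  proof cases
    case 1
    then obtain d where "d > 0" "\<And>u. u \<in> {0..} \<Longrightarrow> \<bar>u - s\<bar> < d \<Longrightarrow> f u > 0"
      using continuous_on_pos_neighbourhood[OF cont] step.hyps by (metis atLeast_iff)
    then show ?thesis
      by (intro exI[of _ d]) (use step.hyps in \<open>auto simp: less_imp_le\<close>)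
  next
    case 2
    then obtain D where "D > 0" "(f has_real_derivative D) (at s within {0..})"
      using deriv step.hyps by blast
    then obtain d where "d > 0" and inc: "\<forall>h>0. s + h \<in> {0..} \<longrightarrow> h < d \<longrightarrow> f s < f (s + h)"
      using has_real_derivative_pos_inc_right by blast
    have "f u \<ge> 0" if "s \<le> u" "u < s + d" for u
      using inc[rule_format, of "u - s"] 2 step.hyps that by (cases "u = s") auto
    then show ?thesis using \<open>d > 0\<close> by blast
  qed
qed

lemma coupled_positivity:
  fixes x y x' y' :: "real \<Rightarrow> real"
  assumes cx: "continuous_on {0..} x" and cy: "continuous_on {0..} y"
    and "x 0 > 0" "y 0 \<ge> 0"
    and dx: "\<And>t. t > 0 \<Longrightarrow> (x has_real_derivative x' t) (at t)"
    and dy: "\<And>t. t > 0 \<Longrightarrow> (y has_real_derivative y' t) (at t)"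
    and x'_ge: "\<And>t. t > 0 \<Longrightarrow> (\<And>s. 0 \<le> s \<Longrightarrow> s \<le> t \<Longrightarrow> y s \<ge> 0) \<Longrightarrow> x' t + a * x t \<ge> 0"
    and y'_ge: "\<And>t. t > 0 \<Longrightarrow> x t \<ge> 0 \<Longrightarrow> y' t + b * y t \<ge> 0"
    and "t \<ge> 0"
  shows "x t > 0 \<and> y t \<ge> 0"
  using \<open>t \<ge> 0\<close>
proof (induction rule: nonneg_real_induct)
  case (step s)
  have y_nonneg: "y u \<ge> 0" if "0 \<le> u" "\<And>t. 0 < t \<Longrightarrow> t < u \<Longrightarrow> x t \<ge> 0" for u
  proof -
    have "y 0 * exp (b * 0) \<le> y u * exp (b * u)"
      by (rule exp_weighted_increasing[where x'=y'])
        (use that dy y'_ge in \<open>auto intro: continuous_on_subset[OF cy]\<close>)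
    then have "0 \<le> y u * exp (b * u)" using \<open>y 0 \<ge> 0\<close> by simp
    then show ?thesis by (simp add: zero_le_mult_iff)
  qed
  have "x 0 * exp (a * 0) \<le> x s * exp (a * s)"
  proof (rule exp_weighted_increasing[where x'=x'])
    fix t assume "0 < t" "t < s"
    then show "x' t + a * x t \<ge> 0" using step.IH by (intro x'_ge) auto
  qed (use step.hyps dx in \<open>auto intro: continuous_on_subset[OF cx]\<close>)
  then have "0 < x s * exp (a * s)" using \<open>x 0 > 0\<close> by simp
  then have "x s > 0" by (simp add: zero_less_mult_iff)
  then obtain d where "d > 0" and d: "\<And>u. u \<in> {0..} \<Longrightarrow> \<bar>u - s\<bar> < d \<Longrightarrow> x u > 0"
    using continuous_on_pos_neighbourhood[OF cx] step.hyps by (metis atLeast_iff)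
  have x_pos: "x u > 0" if "0 \<le> u" "u < s + d" for u
    using d[of u] step.IH[of u] that by (cases "u < s") auto
  show ?case
    by (intro exI[of _ d]) (use \<open>d > 0\<close> step.hyps x_pos y_nonneg in \<open>auto simp: less_imp_le\<close>)
qed

section \<open>Delayed cooperative pairs do not decay\<close>

lemma indefinite_integral_has_real_derivative:
  fixes g :: "real \<Rightarrow> real"
  assumes "continuous_on {a..} g" "u > a"
  shows "((\<lambda>u. integral {a..u} g) has_real_derivative g u) (at u)"
proof -
  have "((\<lambda>u. integral {a..u} g) has_real_derivative g u) (at u within {a..u+1})"
    by (rule integral_has_real_derivative) (use assms in \<open>auto intro: continuous_on_subset\<close>)
  moreover have "at u within {a..u+1} = at u"
    by (rule at_within_interior) (use assms in \<open>simp add: interior_atLeastAtMost_real\<close>)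
  ultimately show ?thesis by simp
qed

lemma delayed_cooperative_functional_mono:
  fixes x y x' y' :: "real \<Rightarrow> real"
  assumes "\<tau> \<ge> 0" "b > 0" "\<mu>x \<ge> 0" "\<mu>x * \<mu>y \<le> a * b"
    and cy: "continuous_on {T - \<tau>..} y" and y_nonneg: "\<And>t. t \<ge> T - \<tau> \<Longrightarrow> y t \<ge> 0"
    and dx: "\<And>t. t > T \<Longrightarrow> (x has_real_derivative x' t) (at t)"
    and dy: "\<And>t. t > T \<Longrightarrow> (y has_real_derivative y' t) (at t)"
    and x'_ge: "\<And>t. t > T \<Longrightarrow> x' t \<ge> a * y (t - \<tau>) - \<mu>x * x t"
    and y'_ge: "\<And>t. t > T \<Longrightarrow> y' t \<ge> b * x t - \<mu>y * y t"
    and "T < s" "s \<le> t"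
  shows "x s + \<mu>x / b * y s + a * integral {s - \<tau>..s} y
    \<le> x t + \<mu>x / b * y t + a * integral {t - \<tau>..t} y"
proof -
  define k where "k = \<mu>x / b"
  have k: "k \<ge> 0" "k * b = \<mu>x" "k * \<mu>y \<le> a"
    using assms(2-4) by (auto simp: k_def field_simps)
  define G where "G u = integral {T - \<tau>..u} y" for u
  define V where "V t = x t + k * y t + a * (G t - G (t - \<tau>))" for t
  define V' where "V' t = x' t + k * y' t + a * (y t - y (t - \<tau>))" for t
  have window: "G t - G (t - \<tau>) = integral {t - \<tau>..t} y" if "t \<ge> T" for t
    using Henstock_Kurzweil_Integration.integral_combine[where a="T - \<tau>" and c="t - \<tau>" and b=t and f=y]
      integrable_continuous_real[OF continuous_on_subset[OF cy, of "{T - \<tau>..t}"]] that \<open>\<tau> \<ge> 0\<close>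
    by (simp add: G_def)
  have dG: "(G has_real_derivative y u) (at u)" if "u > T - \<tau>" for u
    unfolding G_def by (rule indefinite_integral_has_real_derivative[OF cy that])
  have dV: "(V has_real_derivative V' t) (at t)" if "t > T" for t
  proof -
    have "((\<lambda>t. G (t - \<tau>)) has_real_derivative y (t - \<tau>) * 1) (at t)"
      by (rule DERIV_chain2[where g="\<lambda>t. t - \<tau>", OF dG])
        (use that in \<open>auto intro!: derivative_eq_intros\<close>)
    then have dG_shift: "((\<lambda>t. G (t - \<tau>)) has_real_derivative y (t - \<tau>)) (at t)" by simp
    show ?thesis
      unfolding V_def V'_def using that \<open>\<tau> \<ge> 0\<close>
      by (intro DERIV_add DERIV_cmult DERIV_diff dx dy dG dG_shift) auto
  qed
  have V'_nonneg: "V' t \<ge> 0" if "t > T" for t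
  proof -
    have "k * y' t \<ge> k * (b * x t - \<mu>y * y t)"
      using y'_ge[OF that] k(1) by (rule mult_left_mono)
    then have "k * y' t \<ge> \<mu>x * x t - k * \<mu>y * y t"
      using k(2)[symmetric] by (simp add: algebra_simps)
    moreover have "(a - k * \<mu>y) * y t \<ge> 0"
      using k(3) y_nonneg[of t] that \<open>\<tau> \<ge> 0\<close> by simp
    ultimately show ?thesis
      using x'_ge[OF that] unfolding V'_def by (simp add: algebra_simps)
  qed
  have "V s \<le> V t"
  proof (rule DERIV_nonneg_imp_increasing_open[OF \<open>s \<le> t\<close>])
    show "continuous_on {s..t} V"
    proof (intro continuous_at_imp_continuous_on ballI)
      fix u assume "u \<in> {s..t}"
      then show "isCont V u" using DERIV_isCont[OF dV] \<open>T < s\<close> by simp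
    qed
  next
    fix u assume "s < u"
    then have "T < u" using \<open>T < s\<close> by simp
    then show "\<exists>D. (V has_real_derivative D) (at u) \<and> 0 \<le> D"
      using dV V'_nonneg by blast
  qed
  then show ?thesis
    using window[of s] window[of t] \<open>T < s\<close> \<open>s \<le> t\<close> by (simp add: V_def k_def)
qed

lemma delayed_cooperative_pair_not_vanishing:
  fixes x y x' y' :: "real \<Rightarrow> real"
  assumes "\<tau> \<ge> 0" "a \<ge> 0" "b > 0" "\<mu>x \<ge> 0" "\<mu>x * \<mu>y \<le> a * b"
    and cx: "continuous_on {T..} x" and cy: "continuous_on {T - \<tau>..} y"
    and "x T > 0" and y_nonneg: "\<And>t. t \<ge> T - \<tau> \<Longrightarrow> y t \<ge> 0"
    and dx: "\<And>t. t > T \<Longrightarrow> (x has_real_derivative x' t) (at t)"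
    and dy: "\<And>t. t > T \<Longrightarrow> (y has_real_derivative y' t) (at t)"
    and x'_ge: "\<And>t. t > T \<Longrightarrow> x' t \<ge> a * y (t - \<tau>) - \<mu>x * x t"
    and y'_ge: "\<And>t. t > T \<Longrightarrow> y' t \<ge> b * x t - \<mu>y * y t"
    and x_small: "\<forall>e>0. eventually (\<lambda>t. x t \<le> e) at_top"
    and y_small: "\<forall>e>0. eventually (\<lambda>t. y t \<le> e) at_top"
  shows False
proof -
  define k where "k = \<mu>x / b"
  have "k \<ge> 0" using assms(3,4) by (simp add: k_def)
  define V where "V t = x t + k * y t + a * integral {t - \<tau>..t} y" for t
  have V_mono: "V (T + 1) \<le> V t" if "t \<ge> T + 1" for t
    unfolding V_def k_def
    by (rule delayed_cooperative_functional_mono[OF assms(1,3-5) cy y_nonneg dx dy x'_ge y'_ge])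
      (use that in auto)
  have y_integrable: "y integrable_on {u..v}" if "u \<ge> T - \<tau>" for u v
    by (rule integrable_continuous_real) (use that in \<open>auto intro: continuous_on_subset[OF cy]\<close>)
  have "x T * exp (\<mu>x * T) \<le> x (T + 1) * exp (\<mu>x * (T + 1))"
  proof (rule exp_weighted_increasing[where x'=x'])
    fix t assume "T < t"
    then have "a * y (t - \<tau>) \<ge> 0" using y_nonneg[of "t - \<tau>"] \<open>a \<ge> 0\<close> by simp
    then show "x' t + \<mu>x * x t \<ge> 0" using x'_ge[OF \<open>T < t\<close>] by linarith
  qed (use dx in \<open>auto intro: continuous_on_subset[OF cx]\<close>)
  moreover have "0 < x T * exp (\<mu>x * T)" using \<open>x T > 0\<close> by simp
  ultimately have "0 < x (T + 1) * exp (\<mu>x * (T + 1))" by linarith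
  then have "x (T + 1) > 0" by (simp add: zero_less_mult_iff)
  moreover have "integral {T + 1 - \<tau>..T + 1} y \<ge> 0"
    by (rule integral_nonneg[OF y_integrable]) (use y_nonneg in auto)
  moreover have "k * y (T + 1) \<ge> 0" using y_nonneg[of "T + 1"] \<open>k \<ge> 0\<close> \<open>\<tau> \<ge> 0\<close> by simp
  ultimately have V_pos: "V (T + 1) > 0" unfolding V_def using \<open>a \<ge> 0\<close> by (simp add: add_pos_nonneg)
  define c where "c = 1 + k + a * \<tau>"
  have "c > 0" using \<open>k \<ge> 0\<close> \<open>a \<ge> 0\<close> \<open>\<tau> \<ge> 0\<close> by (simp add: c_def add_pos_nonneg)
  define e where "e = V (T + 1) / (2 * c)"
  have "e > 0" using V_pos \<open>c > 0\<close> by (simp add: e_def)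
  then have "eventually (\<lambda>t. x t \<le> e \<and> y t \<le> e) at_top"
    using x_small y_small by (simp add: eventually_conj)
  then obtain T' where T': "\<And>t. t \<ge> T' \<Longrightarrow> x t \<le> e \<and> y t \<le> e"
    unfolding eventually_at_top_linorder by blast
  define t where "t = max (T + 1) T' + \<tau>"
  have t: "t \<ge> T + 1" "t - \<tau> \<ge> T'" "t \<ge> T'"
    using \<open>\<tau> \<ge> 0\<close> by (auto simp: t_def)
  have "integral {t - \<tau>..t} y \<le> integral {t - \<tau>..t} (\<lambda>_. e)"
    by (rule integral_le[OF y_integrable]) (use T' t \<open>\<tau> \<ge> 0\<close> in auto)
  then have "a * integral {t - \<tau>..t} y \<le> a * (\<tau> * e)"
    using t \<open>a \<ge> 0\<close> \<open>\<tau> \<ge> 0\<close> by (simp add: mult_left_mono)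
  moreover have "k * y t \<le> k * e" using \<open>k \<ge> 0\<close> T'[OF t(3)] by (simp add: mult_left_mono)
  ultimately have "V t \<le> c * e"
    using T'[OF t(3)] unfolding V_def c_def by (simp add: algebra_simps)
  also have "\<dots> = V (T + 1) / 2" using \<open>c > 0\<close> by (simp add: e_def)
  finally show False using V_mono[OF t(1)] V_pos by simp
qed

section \<open>The host-vector model\<close>

lemma Limsup_ereal_nonpos_iff:
  fixes f :: "'a \<Rightarrow> real"
  shows "Limsup F (\<lambda>t. ereal (f t)) \<le> 0 \<longleftrightarrow> (\<forall>e>0. eventually (\<lambda>t. f t \<le> e) F)"
proof
  assume "Limsup F (\<lambda>t. ereal (f t)) \<le> 0"
  then have lim: "\<forall>y>0. eventually (\<lambda>t. ereal (f t) < y) F"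
    unfolding Limsup_le_iff by simp
  show "\<forall>e>0. eventually (\<lambda>t. f t \<le> e) F"
  proof (intro allI impI)
    fix e :: real assume "e > 0"
    then have "eventually (\<lambda>t. ereal (f t) < ereal e) F" using lim[rule_format, of "ereal e"] by simp
    then show "eventually (\<lambda>t. f t \<le> e) F" by (auto elim: eventually_mono)
  qed
next
  assume small: "\<forall>e>0. eventually (\<lambda>t. f t \<le> e) F"
  show "Limsup F (\<lambda>t. ereal (f t)) \<le> 0"
    unfolding Limsup_le_iff
  proof (intro allI impI)
    fix y :: ereal assume "y > 0"
    then obtain e where "e > 0" "ereal e < y"
      using ereal_dense2 ereal_less(2) by (metis less_trans)
    from small \<open>e > 0\<close> have "eventually (\<lambda>t. f t \<le> e) F" by blast
    then show "eventually (\<lambda>t. y > ereal (f t)) F"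
      by (rule eventually_mono) (metis \<open>ereal e < y\<close> ereal_less_eq(3) le_less_trans)
  qed
qed

lemma Limsup_ereal_pos:
  fixes f :: "'a \<Rightarrow> real"
  assumes "F \<noteq> bot" "eventually (\<lambda>t. f t \<ge> c) F" "c > 0"
  shows "Limsup F (\<lambda>t. ereal (f t)) > 0"
proof -
  have "ereal c \<le> Limsup F (\<lambda>t. ereal (f t))"
    by (rule le_Limsup) (use assms in auto)
  then show ?thesis using \<open>c > 0\<close> by (metis ereal_less(2) less_le_trans)
qed

text \<open>The three quantities are the bounds \<open>S\<^sub>h \<ge> \<beta>\<^sub>h / (C\<^sub>v\<^sub>h \<epsilon> + \<mu>\<^sub>h) - \<epsilon>\<close>,
  \<open>S\<^sub>v \<ge> \<beta>\<^sub>v / (C\<^sub>h\<^sub>v \<epsilon> + \<mu>\<^sub>v) - \<epsilon>\<close> and \<open>N\<^sub>v \<le> \<beta>\<^sub>v / \<mu>\<^sub>v + \<epsilon>\<close> that hold eventually once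
  \<open>I\<^sub>h, I\<^sub>v \<le> \<epsilon>\<close>. At \<open>\<epsilon> = 0\<close> the product is \<open>C\<^sub>v\<^sub>h C\<^sub>h\<^sub>v \<beta>\<^sub>h / \<mu>\<^sub>h = R\<^sub>0\<^sup>2 \<mu>\<^sub>h \<mu>\<^sub>v\<close>.\<close>

lemma R0_margin:
  fixes \<beta>h \<beta>v \<mu>h \<mu>v Cvh Chv :: real
  assumes "\<beta>h > 0" "\<beta>v > 0" "\<mu>h > 0" "\<mu>v > 0" "Cvh > 0" "Chv > 0"
    and "\<mu>h\<^sup>2 * \<mu>v < Cvh * Chv * \<beta>h"
  obtains \<epsilon> where "\<epsilon> > 0" "\<beta>h / (Cvh * \<epsilon> + \<mu>h) - \<epsilon> > 0" "\<beta>v / (Chv * \<epsilon> + \<mu>v) - \<epsilon> > 0"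
    "\<mu>h * \<mu>v < Cvh * (\<beta>h / (Cvh * \<epsilon> + \<mu>h) - \<epsilon>) / (\<beta>v / \<mu>v + \<epsilon>) *
                 (Chv * (\<beta>v / (Chv * \<epsilon> + \<mu>v) - \<epsilon>))"
proof -
  define Lh where "Lh \<epsilon> = \<beta>h / (Cvh * \<epsilon> + \<mu>h) - \<epsilon>" for \<epsilon> :: real
  define Lv where "Lv \<epsilon> = \<beta>v / (Chv * \<epsilon> + \<mu>v) - \<epsilon>" for \<epsilon> :: real
  define g where "g \<epsilon> = Cvh * Lh \<epsilon> / (\<beta>v / \<mu>v + \<epsilon>) * (Chv * Lv \<epsilon>)" for \<epsilon> :: real
  have "g 0 = Cvh * Chv * \<beta>h / \<mu>h"
    using assms by (simp add: g_def Lh_def Lv_def field_simps)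
  moreover have "Cvh * Chv * \<beta>h / \<mu>h > \<mu>h * \<mu>v"
    using assms by (simp add: field_simps power2_eq_square)
  ultimately have "g 0 > \<mu>h * \<mu>v" by simp
  moreover have "continuous (at_right 0) g"
    unfolding g_def Lh_def Lv_def using assms by (auto intro!: continuous_intros)
  ultimately have "eventually (\<lambda>\<epsilon>. g \<epsilon> > \<mu>h * \<mu>v) (at_right 0)"
    unfolding continuous_within by (rule order_tendstoD(1)[rotated])
  moreover have "continuous (at_right 0) Lh" "Lh 0 > 0"
    unfolding Lh_def using assms by (auto intro!: continuous_intros)
  then have "eventually (\<lambda>\<epsilon>. Lh \<epsilon> > 0) (at_right 0)"
    unfolding continuous_within by (rule order_tendstoD(1))
  moreover have "continuous (at_right 0) Lv" "Lv 0 > 0"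
    unfolding Lv_def using assms by (auto intro!: continuous_intros)
  then have "eventually (\<lambda>\<epsilon>. Lv \<epsilon> > 0) (at_right 0)"
    unfolding continuous_within by (rule order_tendstoD(1))
  moreover have "eventually (\<lambda>\<epsilon>. \<epsilon> > 0) (at_right (0::real))" by (rule eventually_at_right_less)
  ultimately have "eventually (\<lambda>\<epsilon>. \<epsilon> > 0 \<and> g \<epsilon> > \<mu>h * \<mu>v \<and> Lh \<epsilon> > 0 \<and> Lv \<epsilon> > 0) (at_right 0)"
    by eventually_elim blast
  then obtain \<epsilon> where "\<epsilon> > 0" "g \<epsilon> > \<mu>h * \<mu>v" "Lh \<epsilon> > 0" "Lv \<epsilon> > 0"
    using eventually_happens' trivial_limit_at_right_real by blast
  then show thesis using that unfolding g_def Lh_def Lv_def by blast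
qed

locale host_vector_solution =
  fixes \<beta>h \<beta>v \<mu>h \<mu>v Cvh Chv \<tau> :: real
    and p1 p2 p3 p4 Sh Ih Sv Iv :: "real \<Rightarrow> real"
  assumes params_pos: "\<beta>h > 0" "\<beta>v > 0" "\<mu>h > 0" "\<mu>v > 0" "Cvh > 0" "Chv > 0"
    and delay_nonneg: "\<tau> \<ge> 0"
    and initial_in_D: "D_set \<tau> p1 p2 p3 p4"
    and solution: "is_solution \<beta>h \<beta>v \<mu>h \<mu>v Cvh Chv \<tau> p1 p2 p3 p4 Sh Ih Sv Iv"
begin

definition Nv :: "real \<Rightarrow> real" where "Nv t = Sv t + Iv t"

definition dSh :: "real \<Rightarrow> real" where "dSh t = \<beta>h - Cvh * Iv t / Nv t * Sh t - \<mu>h * Sh t"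
definition dIh :: "real \<Rightarrow> real"
  where "dIh t = Cvh * Iv (t - \<tau>) / Nv (t - \<tau>) * Sh (t - \<tau>) - \<mu>h * Ih t"
definition dSv :: "real \<Rightarrow> real" where "dSv t = \<beta>v - Chv * Ih t * Sv t - \<mu>v * Sv t"
definition dIv :: "real \<Rightarrow> real" where "dIv t = Chv * Ih t * Sv t - \<mu>v * Iv t"

lemma initial_segment_nonneg:
  assumes "-\<tau> \<le> \<theta>" "\<theta> \<le> 0"
  shows "Sh \<theta> \<ge> 0" "Ih \<theta> \<ge> 0" "Sv \<theta> \<ge> 0" "Iv \<theta> \<ge> 0" "Nv \<theta> > 0"
  using solution initial_in_D assms
  unfolding is_solution_def D_set_def C_plus_def Nv_def by auto

lemma Ih_0_pos: "Ih 0 > 0"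
  using solution initial_in_D delay_nonneg unfolding is_solution_def D_set_def by auto

lemma continuous_on_solution:
  assumes "S \<subseteq> {-\<tau>..}"
  shows "continuous_on S Sh" "continuous_on S Ih" "continuous_on S Sv" "continuous_on S Iv"
    "continuous_on S Nv"
  using solution assms unfolding is_solution_def Nv_def[abs_def]
  by (auto intro: continuous_on_subset continuous_intros)

lemma solution_has_derivative_within:
  assumes "t \<ge> 0"
  shows "(Sh has_real_derivative dSh t) (at t within {0..})"
    "(Ih has_real_derivative dIh t) (at t within {0..})"
    "(Sv has_real_derivative dSv t) (at t within {0..})"
    "(Iv has_real_derivative dIv t) (at t within {0..})"
  using solution assms unfolding is_solution_def dSh_def dIh_def dSv_def dIv_def Nv_def by auto

lemma solution_has_derivative:
  assumes "t > 0"
  shows "(Sh has_real_derivative dSh t) (at t)" "(Ih has_real_derivative dIh t) (at t)"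
    "(Sv has_real_derivative dSv t) (at t)" "(Iv has_real_derivative dIv t) (at t)"
proof -
  have "at t within {0..} = at t"
    using assms by (intro at_within_interior) (simp add: interior_real_atLeast)
  then show "(Sh has_real_derivative dSh t) (at t)" "(Ih has_real_derivative dIh t) (at t)"
    "(Sv has_real_derivative dSv t) (at t)" "(Iv has_real_derivative dIv t) (at t)"
    using solution_has_derivative_within[of t] assms by auto
qed

lemma Nv_has_derivative:
  assumes "t > 0"
  shows "(Nv has_real_derivative \<beta>v - \<mu>v * Nv t) (at t)"
proof -
  have "(Nv has_real_derivative dSv t + dIv t) (at t)"
    unfolding Nv_def[abs_def] by (intro DERIV_add solution_has_derivative assms)
  moreover have "dSv t + dIv t = \<beta>v - \<mu>v * Nv t"
    unfolding dSv_def dIv_def Nv_def by (simp add: algebra_simps)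
  ultimately show ?thesis by simp
qed

lemma Nv_bounds:
  assumes "t \<ge> 0"
  shows "min (Nv 0) (\<beta>v / \<mu>v) \<le> Nv t" "Nv t \<le> max (Nv 0) (\<beta>v / \<mu>v)"
proof -
  have cont: "continuous_on {0..} Nv" using delay_nonneg by (intro continuous_on_solution) auto
  show "min (Nv 0) (\<beta>v / \<mu>v) \<le> Nv t"
    by (rule linear_diff_ineq_ge_min[OF params_pos(4) cont Nv_has_derivative]) (use assms in auto)
  show "Nv t \<le> max (Nv 0) (\<beta>v / \<mu>v)"
    by (rule linear_diff_ineq_le_max[OF params_pos(4) cont Nv_has_derivative]) (use assms in auto)
qed

lemma Nv_lower_bound:
  obtains Nl where "Nl > 0" "\<And>t. t \<ge> 0 \<Longrightarrow> Nl \<le> Nv t"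
proof (rule that)
  show "min (Nv 0) (\<beta>v / \<mu>v) > 0"
    using initial_segment_nonneg(5)[of 0] delay_nonneg params_pos by simp
qed (rule Nv_bounds(1))

lemma Nv_upper_bound:
  obtains NU where "NU > 0" "\<And>t. t \<ge> 0 \<Longrightarrow> Nv t \<le> NU"
proof (rule that)
  show "max (Nv 0) (\<beta>v / \<mu>v) > 0" using params_pos by (simp add: less_max_iff_disj)
qed (rule Nv_bounds(2))

lemma Nv_pos:
  assumes "t \<ge> -\<tau>"
  shows "Nv t > 0"
proof (cases "t \<le> 0")
  case False
  obtain Nl where "Nl > 0" and "\<And>t. t \<ge> 0 \<Longrightarrow> Nl \<le> Nv t"
    using Nv_lower_bound by blast
  then have "Nl \<le> Nv t" using False by simp
  with \<open>Nl > 0\<close> show ?thesis by linarith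
qed (use initial_segment_nonneg assms in auto)

lemma Sh_nonneg:
  assumes "t \<ge> -\<tau>"
  shows "Sh t \<ge> 0"
proof (cases "t \<le> 0")
  case False
  show ?thesis
  proof (rule nonneg_if_deriv_pos_at_zeros[of Sh])
    show "continuous_on {0..} Sh" using delay_nonneg by (intro continuous_on_solution) auto
    show "Sh 0 \<ge> 0" using initial_segment_nonneg delay_nonneg by simp
    fix s :: real assume "s \<ge> 0" "Sh s = 0"
    then show "\<exists>D>0. (Sh has_real_derivative D) (at s within {0..})"
      using solution_has_derivative_within(1)[of s] params_pos by (auto simp: dSh_def)
  qed (use False in simp)
qed (use initial_segment_nonneg assms in auto)

lemma Sv_nonneg:
  assumes "t \<ge> -\<tau>"
  shows "Sv t \<ge> 0"
proof (cases "t \<le> 0")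
  case False
  show ?thesis
  proof (rule nonneg_if_deriv_pos_at_zeros[of Sv])
    show "continuous_on {0..} Sv" using delay_nonneg by (intro continuous_on_solution) auto
    show "Sv 0 \<ge> 0" using initial_segment_nonneg delay_nonneg by simp
    fix s :: real assume "s \<ge> 0" "Sv s = 0"
    then show "\<exists>D>0. (Sv has_real_derivative D) (at s within {0..})"
      using solution_has_derivative_within(3)[of s] params_pos by (auto simp: dSv_def)
  qed (use False in simp)
qed (use initial_segment_nonneg assms in auto)

lemma Ih_pos_Iv_nonneg:
  assumes "t \<ge> 0"
  shows "Ih t > 0 \<and> Iv t \<ge> 0"
proof (rule coupled_positivity[of Ih Iv _ _ \<mu>h \<mu>v])
  show "continuous_on {0..} Ih" "continuous_on {0..} Iv"
    using delay_nonneg by (auto intro: continuous_on_solution)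
  show "Iv 0 \<ge> 0" using initial_segment_nonneg delay_nonneg by simp
next
  fix t :: real assume "t > 0" and Iv_nonneg: "\<And>s. 0 \<le> s \<Longrightarrow> s \<le> t \<Longrightarrow> Iv s \<ge> 0"
  have "Iv (t - \<tau>) \<ge> 0"
    using Iv_nonneg[of "t - \<tau>"] initial_segment_nonneg(4)[of "t - \<tau>"] \<open>t > 0\<close> delay_nonneg
    by (cases "t - \<tau> \<le> 0") auto
  moreover have "Sh (t - \<tau>) \<ge> 0" "Nv (t - \<tau>) > 0"
    using Sh_nonneg Nv_pos \<open>t > 0\<close> by auto
  ultimately show "dIh t + \<mu>h * Ih t \<ge> 0" unfolding dIh_def using params_pos by simp
next
  fix t :: real assume "t > 0" "Ih t \<ge> 0"
  then show "dIv t + \<mu>v * Iv t \<ge> 0" unfolding dIv_def using params_pos Sv_nonneg[of t] delay_nonneg by simp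
qed (use Ih_0_pos solution_has_derivative assms in auto)

lemma Ih_nonneg:
  assumes "t \<ge> -\<tau>"
  shows "Ih t \<ge> 0"
  using Ih_pos_Iv_nonneg[of t] initial_segment_nonneg(2)[of t] assms by (cases "t \<le> 0") auto

lemma Iv_nonneg:
  assumes "t \<ge> -\<tau>"
  shows "Iv t \<ge> 0"
  using Ih_pos_Iv_nonneg[of t] initial_segment_nonneg(4)[of t] assms by (cases "t \<le> 0") auto

lemma infected_vector_fraction_bounds:
  assumes "t \<ge> -\<tau>"
  shows "0 \<le> Iv t / Nv t" "Iv t / Nv t \<le> 1"
  using Iv_nonneg[OF assms] Sv_nonneg[OF assms] Nv_pos[OF assms] by (auto simp: Nv_def)

lemma Sh_upper_bound:
  obtains M where "M > 0" "\<And>t. t \<ge> -\<tau> \<Longrightarrow> Sh t \<le> M"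
proof -
  have "\<exists>m\<in>{-\<tau>..0}. \<forall>\<theta>\<in>{-\<tau>..0}. Sh \<theta> \<le> Sh m"
    by (rule continuous_attains_sup) (use delay_nonneg in \<open>auto intro: continuous_on_solution\<close>)
  then obtain m where m: "\<And>\<theta>. \<theta> \<in> {-\<tau>..0} \<Longrightarrow> Sh \<theta> \<le> Sh m" by blast
  have "Sh t \<le> max (Sh m) (\<beta>h / \<mu>h)" if "t \<ge> -\<tau>" for t
  proof (cases "t \<le> 0")
    case False
    have "Sh t \<le> max (Sh 0) (\<beta>h / \<mu>h)"
    proof (rule linear_diff_ineq_le_max[OF params_pos(3) _ solution_has_derivative(1)])
      show "continuous_on {0..} Sh" using delay_nonneg by (intro continuous_on_solution) auto
      fix s :: real assume "0 < s"
      then have "Cvh * (Iv s / Nv s) * Sh s \<ge> 0"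
        using params_pos infected_vector_fraction_bounds(1)[of s] Sh_nonneg[of s] delay_nonneg
        by (intro mult_nonneg_nonneg) auto
      then show "dSh s \<le> \<beta>h - \<mu>h * Sh s" unfolding dSh_def by simp
    qed (use False in auto)
    then show ?thesis using m[of 0] delay_nonneg by auto
  qed (use m[of t] that in auto)
  moreover have "max (Sh m) (\<beta>h / \<mu>h) > 0" using params_pos by (simp add: less_max_iff_disj)
  ultimately show thesis using that by blast
qed

lemma Ih_upper_bound:
  obtains M where "M > 0" "\<And>t. t \<ge> 0 \<Longrightarrow> Ih t \<le> M"
proof -
  obtain MS where "MS > 0" and MS: "\<And>t. t \<ge> -\<tau> \<Longrightarrow> Sh t \<le> MS"
    using Sh_upper_bound by blast
  have "Ih t \<le> max (Ih 0) (Cvh * MS / \<mu>h)" if "t \<ge> 0" for t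
  proof (rule linear_diff_ineq_le_max[OF params_pos(3) _ solution_has_derivative(2)])
    show "continuous_on {0..} Ih" using delay_nonneg by (intro continuous_on_solution) auto
    fix s :: real assume "0 < s"
    then have "Iv (s - \<tau>) / Nv (s - \<tau>) * Sh (s - \<tau>) \<le> 1 * MS"
      using infected_vector_fraction_bounds[of "s - \<tau>"] MS[of "s - \<tau>"] Sh_nonneg[of "s - \<tau>"]
      by (intro mult_mono) auto
    then have "Cvh * Iv (s - \<tau>) / Nv (s - \<tau>) * Sh (s - \<tau>) \<le> Cvh * MS"
      using params_pos mult_left_mono[of _ _ Cvh] by fastforce
    then show "dIh s \<le> Cvh * MS - \<mu>h * Ih s" unfolding dIh_def by simp
  qed (use that in auto)
  moreover have "max (Ih 0) (Cvh * MS / \<mu>h) > 0" using Ih_0_pos by (simp add: less_max_iff_disj)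
  ultimately show thesis using that by blast
qed

lemma Limsup_Sh_pos: "Limsup at_top (\<lambda>t. ereal (Sh t)) > 0"
proof -
  define c where "c = \<beta>h / (Cvh + \<mu>h)"
  have "c > 0" using params_pos by (simp add: c_def)
  have "eventually (\<lambda>t. Sh t \<ge> \<beta>h / (Cvh + \<mu>h) - c / 2) at_top"
  proof (rule linear_diff_ineq_eventually_ge[OF _ _ solution_has_derivative(1)])
    show "continuous_on {0..} Sh" using delay_nonneg by (intro continuous_on_solution) auto
    fix s :: real assume "0 < s"
    then have "Iv s / Nv s * Sh s \<le> 1 * Sh s"
      using infected_vector_fraction_bounds[of s] Sh_nonneg[of s] delay_nonneg
      by (intro mult_right_mono) auto
    then have "Cvh * Iv s / Nv s * Sh s \<le> Cvh * Sh s"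
      using params_pos mult_left_mono[of _ _ Cvh] by fastforce
    then show "dSh s \<ge> \<beta>h - (Cvh + \<mu>h) * Sh s" unfolding dSh_def by (simp add: algebra_simps)
  qed (use params_pos \<open>c > 0\<close> in auto)
  then have "eventually (\<lambda>t. Sh t \<ge> c / 2) at_top"
    by (rule eventually_mono) (unfold c_def[symmetric], linarith)
  then show ?thesis by (rule Limsup_ereal_pos[OF trivial_limit_at_top_linorder]) (use \<open>c > 0\<close> in simp)
qed

lemma Limsup_Sv_pos: "Limsup at_top (\<lambda>t. ereal (Sv t)) > 0"
proof -
  obtain MI where "MI > 0" and MI: "\<And>t. t \<ge> 0 \<Longrightarrow> Ih t \<le> MI"
    using Ih_upper_bound by blast
  define c where "c = \<beta>v / (Chv * MI + \<mu>v)"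
  have "Chv * MI + \<mu>v > 0" using params_pos \<open>MI > 0\<close> by (simp add: add_pos_pos)
  then have "c > 0" using params_pos by (simp add: c_def)
  have "eventually (\<lambda>t. Sv t \<ge> \<beta>v / (Chv * MI + \<mu>v) - c / 2) at_top"
  proof (rule linear_diff_ineq_eventually_ge[OF _ _ solution_has_derivative(3)])
    show "continuous_on {0..} Sv" using delay_nonneg by (intro continuous_on_solution) auto
    fix s :: real assume "0 < s"
    then have "Chv * Ih s * Sv s \<le> Chv * MI * Sv s"
      using params_pos MI[of s] Sv_nonneg[of s] delay_nonneg
      by (intro mult_right_mono mult_left_mono) auto
    then show "dSv s \<ge> \<beta>v - (Chv * MI + \<mu>v) * Sv s" unfolding dSv_def by (simp add: algebra_simps)
  qed (use \<open>Chv * MI + \<mu>v > 0\<close> \<open>c > 0\<close> in auto)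
  then have "eventually (\<lambda>t. Sv t \<ge> c / 2) at_top"
    by (rule eventually_mono) (unfold c_def[symmetric], linarith)
  then show ?thesis by (rule Limsup_ereal_pos[OF trivial_limit_at_top_linorder]) (use \<open>c > 0\<close> in simp)
qed

lemma Iv_vanishes_if_Ih_vanishes:
  assumes Ih_small: "\<forall>e>0. eventually (\<lambda>t. Ih t \<le> e) at_top"
  shows "\<forall>e>0. eventually (\<lambda>t. Iv t \<le> e) at_top"
proof (intro allI impI)
  fix e :: real assume "e > 0"
  obtain NU where "NU > 0" and NU: "\<And>t. t \<ge> 0 \<Longrightarrow> Nv t \<le> NU"
    using Nv_upper_bound by blast
  define \<delta> where "\<delta> = \<mu>v * e / (2 * Chv * NU)"
  have "\<delta> > 0" using params_pos \<open>e > 0\<close> \<open>NU > 0\<close> by (simp add: \<delta>_def)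
  then obtain T where T: "\<And>t. t \<ge> T \<Longrightarrow> Ih t \<le> \<delta>"
    using Ih_small unfolding eventually_at_top_linorder by blast
  have "eventually (\<lambda>t. Iv t \<le> \<mu>v * (e / 2) / \<mu>v + e / 2) at_top"
  proof (rule linear_diff_ineq_eventually_le[OF params_pos(4), where T="max T 0" and f'=dIv])
    show "continuous_on {max T 0..} Iv" using delay_nonneg by (intro continuous_on_solution) auto
    fix t assume t: "max T 0 < t"
    then show "(Iv has_real_derivative dIv t) (at t)" by (intro solution_has_derivative) auto
    have "Sv t \<le> NU" using NU[of t] Iv_nonneg[of t] t delay_nonneg by (simp add: Nv_def)
    then have "Ih t * Sv t \<le> \<delta> * NU"
      using T[of t] Ih_nonneg[of t] Sv_nonneg[of t] t delay_nonneg by (intro mult_mono) auto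
    then have "Chv * (Ih t * Sv t) \<le> Chv * (\<delta> * NU)" using params_pos by (intro mult_left_mono) auto
    also have "Chv * (\<delta> * NU) = \<mu>v * (e / 2)"
      using params_pos \<open>NU > 0\<close> by (simp add: \<delta>_def field_simps)
    finally show "dIv t \<le> \<mu>v * (e / 2) - \<mu>v * Iv t" unfolding dIv_def by (simp add: algebra_simps)
  qed (use \<open>e > 0\<close> in simp)
  then show "eventually (\<lambda>t. Iv t \<le> e) at_top" using params_pos by simp
qed

lemma Ih_vanishes_if_Iv_vanishes:
  assumes Iv_small: "\<forall>e>0. eventually (\<lambda>t. Iv t \<le> e) at_top"
  shows "\<forall>e>0. eventually (\<lambda>t. Ih t \<le> e) at_top"
proof (intro allI impI)
  fix e :: real assume "e > 0"
  obtain Nl where "Nl > 0" and Nl: "\<And>t. t \<ge> 0 \<Longrightarrow> Nl \<le> Nv t"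
    using Nv_lower_bound by blast
  obtain MS where "MS > 0" and MS: "\<And>t. t \<ge> -\<tau> \<Longrightarrow> Sh t \<le> MS"
    using Sh_upper_bound by blast
  define \<delta> where "\<delta> = \<mu>h * e * Nl / (2 * Cvh * MS)"
  have "\<delta> > 0" using params_pos \<open>e > 0\<close> \<open>Nl > 0\<close> \<open>MS > 0\<close> by (simp add: \<delta>_def)
  then obtain T where T: "\<And>t. t \<ge> T \<Longrightarrow> Iv t \<le> \<delta>"
    using Iv_small unfolding eventually_at_top_linorder by blast
  have "eventually (\<lambda>t. Ih t \<le> \<mu>h * (e / 2) / \<mu>h + e / 2) at_top"
  proof (rule linear_diff_ineq_eventually_le[OF params_pos(3), where T="max T 0 + \<tau>" and f'=dIh])
    show "continuous_on {max T 0 + \<tau>..} Ih" using delay_nonneg by (intro continuous_on_solution) auto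
    fix t assume t: "max T 0 + \<tau> < t"
    then show "(Ih has_real_derivative dIh t) (at t)"
      using delay_nonneg by (intro solution_has_derivative) auto
    have s: "t - \<tau> \<ge> T" "t - \<tau> \<ge> 0" using t by auto
    have "Iv (t - \<tau>) / Nv (t - \<tau>) \<le> \<delta> / Nl"
      by (rule frac_le) (use T[OF s(1)] Nl[OF s(2)] Iv_nonneg[of "t - \<tau>"] \<open>\<delta> > 0\<close> \<open>Nl > 0\<close> s in auto)
    then have "Iv (t - \<tau>) / Nv (t - \<tau>) * Sh (t - \<tau>) \<le> \<delta> / Nl * MS"
      using MS[of "t - \<tau>"] Sh_nonneg[of "t - \<tau>"] infected_vector_fraction_bounds(1)[of "t - \<tau>"]
        \<open>\<delta> > 0\<close> \<open>Nl > 0\<close> s delay_nonneg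
      by (intro mult_mono) auto
    then have "Cvh * (Iv (t - \<tau>) / Nv (t - \<tau>) * Sh (t - \<tau>)) \<le> Cvh * (\<delta> / Nl * MS)"
      using params_pos by (intro mult_left_mono) auto
    also have "Cvh * (\<delta> / Nl * MS) = \<mu>h * (e / 2)"
      using params_pos \<open>Nl > 0\<close> \<open>MS > 0\<close> by (simp add: \<delta>_def field_simps)
    finally show "dIh t \<le> \<mu>h * (e / 2) - \<mu>h * Ih t" unfolding dIh_def by (simp add: algebra_simps)
  qed (use \<open>e > 0\<close> in simp)
  then show "eventually (\<lambda>t. Ih t \<le> e) at_top" using params_pos by simp
qed

lemma Sh_eventually_ge_if_Iv_vanishes:
  assumes Iv_small: "\<forall>e>0. eventually (\<lambda>t. Iv t \<le> e) at_top" and "\<epsilon> > 0"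
  shows "eventually (\<lambda>t. \<beta>h / (Cvh * \<epsilon> + \<mu>h) - \<epsilon> \<le> Sh t) at_top"
proof -
  obtain Nl where "Nl > 0" and Nl: "\<And>t. t \<ge> 0 \<Longrightarrow> Nl \<le> Nv t"
    using Nv_lower_bound by blast
  have "\<epsilon> * Nl > 0" using \<open>\<epsilon> > 0\<close> \<open>Nl > 0\<close> by simp
  then obtain T where T: "\<And>t. t \<ge> T \<Longrightarrow> Iv t \<le> \<epsilon> * Nl"
    using Iv_small unfolding eventually_at_top_linorder by blast
  show ?thesis
  proof (rule linear_diff_ineq_eventually_ge[where T="max T 0" and f'=dSh])
    show "Cvh * \<epsilon> + \<mu>h > 0" using params_pos \<open>\<epsilon> > 0\<close> by (simp add: add_pos_pos)
    show "continuous_on {max T 0..} Sh" using delay_nonneg by (intro continuous_on_solution) auto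
    fix t assume t: "max T 0 < t"
    then show "(Sh has_real_derivative dSh t) (at t)" by (intro solution_has_derivative) auto
    have "\<epsilon> * Nl \<le> \<epsilon> * Nv t" using Nl[of t] t \<open>\<epsilon> > 0\<close> by (intro mult_left_mono) auto
    then have "Iv t \<le> \<epsilon> * Nv t" using T[of t] t by fastforce
    then have "Iv t / Nv t \<le> \<epsilon>" using Nv_pos[of t] t delay_nonneg by (simp add: pos_divide_le_eq)
    then have "Cvh * (Iv t / Nv t) * Sh t \<le> Cvh * \<epsilon> * Sh t"
      using params_pos Sh_nonneg[of t] t delay_nonneg by (intro mult_right_mono mult_left_mono) auto
    then show "dSh t \<ge> \<beta>h - (Cvh * \<epsilon> + \<mu>h) * Sh t" unfolding dSh_def by (simp add: algebra_simps)
  qed (rule \<open>\<epsilon> > 0\<close>)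
qed

lemma Sv_eventually_ge_if_Ih_vanishes:
  assumes Ih_small: "\<forall>e>0. eventually (\<lambda>t. Ih t \<le> e) at_top" and "\<epsilon> > 0"
  shows "eventually (\<lambda>t. \<beta>v / (Chv * \<epsilon> + \<mu>v) - \<epsilon> \<le> Sv t) at_top"
proof -
  obtain T where T: "\<And>t. t \<ge> T \<Longrightarrow> Ih t \<le> \<epsilon>"
    using Ih_small \<open>\<epsilon> > 0\<close> unfolding eventually_at_top_linorder by blast
  show ?thesis
  proof (rule linear_diff_ineq_eventually_ge[where T="max T 0" and f'=dSv])
    show "Chv * \<epsilon> + \<mu>v > 0" using params_pos \<open>\<epsilon> > 0\<close> by (simp add: add_pos_pos)
    show "continuous_on {max T 0..} Sv" using delay_nonneg by (intro continuous_on_solution) auto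
    fix t assume t: "max T 0 < t"
    then show "(Sv has_real_derivative dSv t) (at t)" by (intro solution_has_derivative) auto
    have "Chv * Ih t * Sv t \<le> Chv * \<epsilon> * Sv t"
      using T[of t] params_pos Sv_nonneg[of t] t delay_nonneg
      by (intro mult_right_mono mult_left_mono) auto
    then show "dSv t \<ge> \<beta>v - (Chv * \<epsilon> + \<mu>v) * Sv t" unfolding dSv_def by (simp add: algebra_simps)
  qed (rule \<open>\<epsilon> > 0\<close>)
qed

lemma Nv_eventually_le:
  assumes "\<epsilon> > 0"
  shows "eventually (\<lambda>t. Nv t \<le> \<beta>v / \<mu>v + \<epsilon>) at_top"
  by (rule linear_diff_ineq_eventually_le[OF params_pos(4) _ Nv_has_derivative])
    (use assms delay_nonneg in \<open>auto intro: continuous_on_solution\<close>)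

lemma dIh_ge:
  assumes "t \<ge> \<tau>" "0 \<le> Lh" "Lh \<le> Sh (t - \<tau>)" "0 < U" "Nv (t - \<tau>) \<le> U"
  shows "dIh t \<ge> Cvh * Lh / U * Iv (t - \<tau>) - \<mu>h * Ih t"
proof -
  have "Iv (t - \<tau>) / U \<le> Iv (t - \<tau>) / Nv (t - \<tau>)"
    using assms Nv_pos[of "t - \<tau>"] Iv_nonneg[of "t - \<tau>"] delay_nonneg
    by (intro divide_left_mono) auto
  then have "Iv (t - \<tau>) / U * Lh \<le> Iv (t - \<tau>) / Nv (t - \<tau>) * Sh (t - \<tau>)"
    using assms infected_vector_fraction_bounds(1)[of "t - \<tau>"] Iv_nonneg[of "t - \<tau>"] delay_nonneg
    by (intro mult_mono) auto
  then have "Cvh * (Iv (t - \<tau>) / U * Lh) \<le> Cvh * (Iv (t - \<tau>) / Nv (t - \<tau>) * Sh (t - \<tau>))"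
    using params_pos by (intro mult_left_mono) auto
  then show ?thesis unfolding dIh_def by (simp add: mult_ac)
qed

lemma dIv_ge:
  assumes "t \<ge> 0" "Lv \<le> Sv t"
  shows "dIv t \<ge> Chv * Lv * Ih t - \<mu>v * Iv t"
proof -
  have "Lv * Ih t \<le> Sv t * Ih t"
    using assms Ih_nonneg[of t] delay_nonneg by (intro mult_right_mono) auto
  then have "Chv * (Lv * Ih t) \<le> Chv * (Sv t * Ih t)" using params_pos by (intro mult_left_mono) auto
  then show ?thesis unfolding dIv_def by (simp add: algebra_simps)
qed

lemma infections_not_both_vanishing:
  assumes R: "\<mu>h\<^sup>2 * \<mu>v < Cvh * Chv * \<beta>h"
    and Ih_small: "\<forall>e>0. eventually (\<lambda>t. Ih t \<le> e) at_top"
    and Iv_small: "\<forall>e>0. eventually (\<lambda>t. Iv t \<le> e) at_top"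
  shows False
proof -
  obtain \<epsilon> where "\<epsilon> > 0" and Lh_pos: "\<beta>h / (Cvh * \<epsilon> + \<mu>h) - \<epsilon> > 0"
    and Lv_pos: "\<beta>v / (Chv * \<epsilon> + \<mu>v) - \<epsilon> > 0"
    and margin: "\<mu>h * \<mu>v < Cvh * (\<beta>h / (Cvh * \<epsilon> + \<mu>h) - \<epsilon>) / (\<beta>v / \<mu>v + \<epsilon>) *
                 (Chv * (\<beta>v / (Chv * \<epsilon> + \<mu>v) - \<epsilon>))"
    using R0_margin[OF params_pos R] by blast
  define Lh where "Lh = \<beta>h / (Cvh * \<epsilon> + \<mu>h) - \<epsilon>"
  define Lv where "Lv = \<beta>v / (Chv * \<epsilon> + \<mu>v) - \<epsilon>"
  define U where "U = \<beta>v / \<mu>v + \<epsilon>"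
  have "Lh > 0" "Lv > 0" "U > 0"
    using Lh_pos Lv_pos params_pos \<open>\<epsilon> > 0\<close> by (simp_all add: Lh_def Lv_def U_def add_pos_pos)
  have "eventually (\<lambda>t. Lh \<le> Sh t \<and> Lv \<le> Sv t \<and> Nv t \<le> U) at_top"
    unfolding Lh_def Lv_def U_def using \<open>\<epsilon> > 0\<close>
    by (intro eventually_conj Sh_eventually_ge_if_Iv_vanishes Sv_eventually_ge_if_Ih_vanishes
        Nv_eventually_le Ih_small Iv_small)
  then obtain T0 where T0: "\<And>t. t \<ge> T0 \<Longrightarrow> Lh \<le> Sh t \<and> Lv \<le> Sv t \<and> Nv t \<le> U"
    unfolding eventually_at_top_linorder by blast
  define T where "T = max T0 0"
  show False
  proof (rule delayed_cooperative_pair_not_vanishing[of \<tau> "Cvh * Lh / U" "Chv * Lv" \<mu>h \<mu>v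
        "T + \<tau>" Ih Iv dIh dIv])
    show "\<tau> \<ge> 0" "Cvh * Lh / U \<ge> 0" "Chv * Lv > 0" "\<mu>h \<ge> 0"
      using delay_nonneg params_pos \<open>Lh > 0\<close> \<open>Lv > 0\<close> \<open>U > 0\<close> by simp_all
    show "\<mu>h * \<mu>v \<le> Cvh * Lh / U * (Chv * Lv)"
      using margin unfolding Lh_def Lv_def U_def by simp
    show "continuous_on {T + \<tau>..} Ih" "continuous_on {T + \<tau> - \<tau>..} Iv"
      using delay_nonneg by (auto simp: T_def intro: continuous_on_solution)
    show "Ih (T + \<tau>) > 0" using Ih_pos_Iv_nonneg delay_nonneg by (simp add: T_def)
    show "Iv t \<ge> 0" if "t \<ge> T + \<tau> - \<tau>" for t
      using Iv_nonneg that delay_nonneg by (simp add: T_def)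
    fix t assume "T + \<tau> < t"
    then have t: "t - \<tau> \<ge> T0" "t \<ge> \<tau>" "t \<ge> T0" "t > 0" using delay_nonneg by (auto simp: T_def)
    show "(Ih has_real_derivative dIh t) (at t)" "(Iv has_real_derivative dIv t) (at t)"
      using t(4) by (fact solution_has_derivative)+
    show "dIh t \<ge> Cvh * Lh / U * Iv (t - \<tau>) - \<mu>h * Ih t"
      using T0[OF t(1)] t(2) \<open>Lh > 0\<close> \<open>U > 0\<close> by (intro dIh_ge) auto
    show "dIv t \<ge> Chv * Lv * Ih t - \<mu>v * Iv t"
      using T0[OF t(3)] t(4) by (intro dIv_ge) auto
  qed (fact Ih_small Iv_small)+
qed

theorem solution_weakly_persistent:
  assumes "\<mu>h\<^sup>2 * \<mu>v < Cvh * Chv * \<beta>h"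
  shows "Limsup at_top (\<lambda>t. ereal (Sh t)) > 0 \<and> Limsup at_top (\<lambda>t. ereal (Ih t)) > 0 \<and>
    Limsup at_top (\<lambda>t. ereal (Sv t)) > 0 \<and> Limsup at_top (\<lambda>t. ereal (Iv t)) > 0"
proof -
  have "\<not> Limsup at_top (\<lambda>t. ereal (Ih t)) \<le> 0"
    using infections_not_both_vanishing[OF assms] Iv_vanishes_if_Ih_vanishes
    unfolding Limsup_ereal_nonpos_iff by blast
  moreover have "\<not> Limsup at_top (\<lambda>t. ereal (Iv t)) \<le> 0"
    using infections_not_both_vanishing[OF assms] Ih_vanishes_if_Iv_vanishes
    unfolding Limsup_ereal_nonpos_iff by blast
  ultimately show ?thesis using Limsup_Sh_pos Limsup_Sv_pos by (simp add: not_le)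
qed

end

theorem corollary1:
  fixes \<beta>h \<beta>v \<mu>h \<mu>v Cvh Chv :: real
  assumes "\<beta>h > 0" "\<beta>v > 0" "\<mu>h > 0" "\<mu>v > 0" "Cvh > 0" "Chv > 0"
    and "sqrt (Cvh * Chv * \<beta>h / (\<mu>h ^ 2 * \<mu>v)) > 1"
  shows "\<forall>tau\<ge>0. weakly_persistent \<beta>h \<beta>v \<mu>h \<mu>v Cvh Chv tau"
proof (intro allI impI)
  fix tau :: real assume "tau \<ge> 0"
  have "Cvh * Chv * \<beta>h / (\<mu>h ^ 2 * \<mu>v) > 1" using assms(7) by simp
  then have R: "\<mu>h\<^sup>2 * \<mu>v < Cvh * Chv * \<beta>h" using assms(3,4) by (simp add: pos_less_divide_eq)
  show "weakly_persistent \<beta>h \<beta>v \<mu>h \<mu>v Cvh Chv tau"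
    unfolding weakly_persistent_def
  proof (intro allI impI)
    fix p1 p2 p3 p4 Sh Ih Sv Iv
    assume "D_set tau p1 p2 p3 p4" "is_solution \<beta>h \<beta>v \<mu>h \<mu>v Cvh Chv tau p1 p2 p3 p4 Sh Ih Sv Iv"
    then interpret host_vector_solution \<beta>h \<beta>v \<mu>h \<mu>v Cvh Chv tau p1 p2 p3 p4 Sh Ih Sv Iv
      using assms(1-6) \<open>tau \<ge> 0\<close> by unfold_locales
    show "Limsup at_top (\<lambda>t. ereal (Sh t)) > 0 \<and> Limsup at_top (\<lambda>t. ereal (Ih t)) > 0 \<and>
        Limsup at_top (\<lambda>t. ereal (Sv t)) > 0 \<and> Limsup at_top (\<lambda>t. ereal (Iv t)) > 0"
      using solution_weakly_persistent[OF R] .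
  qed
qed

end
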